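(* Let $m\ge1$, $n\ge0$, $d=m-n$, and let $\lambda$ be a partition with $\lambda_1+d-1\ge0$. Put $\hat x=(x_2,\dots,x_m)$ and $\hat\lambda=(\lambda_2,\lambda_3,\dots)$. Then $$\Big\{SP_\lambda(x,y)\,x^{\rho_m}y^{\rho_n}\Big\}=\Big\{\prod_{j=1}^n(x_1-y_j)\,x_1^{\lambda_1+d-1}\,SP_{\hat\lambda}(\hat x,y)\,x_2^{m-2}x_3^{m-3}\cdots x_m^{0}\,y^{\rho_n}\Big\}.$$
   Context: For a function $f(x,y)$ of $x=(x_1,\dots,x_m)$ and $y=(y_1,\dots,y_n)$, define $\{f\}=\sum_{w\in S_m\times S_n}\varepsilon(w)\,w(f)$. Here $S_m$ permutes the $x_i$, $S_n$ permutes the $y_j$, and $\varepsilon$ is the sign character. Set $x^{\rho_m}=x_1^{m-1}x_2^{m-2}\cdots x_m^0$ and $y^{\rho_n}=y_1^{n-1}\cdots y_n^0$. For a partition $\mu$ and any finite lists of variables $x,y$, the super Schur polynomial is defined by the Jacobi–Trudy formula $SP_\mu(x,y)=\det(h_{\mu_r-r+s}(x,y))_{r,s=1}^{l(\mu)}$, with $SP_\emptyset=1$. The $h_a(x,y)$ are given by $\prod_j(1-ty_j)/\prod_i(1-tx_i)=\sum_{a\ge0}h_a(x,y)t^a$, and $h_a=0$ for $a<0$. Here $l(\mu)$ is the number of nonzero parts of $\mu$. *)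

theory Defs
  imports "HOL-Computational_Algebra.Formal_Power_Series"
          "HOL-Combinatorics.Permutations"
          "Jordan_Normal_Form.Determinant"
begin

text \<open>Variables x = (x_1,...,x_m) are modelled as a function x :: nat => 'a, where
  x_{i+1} is x i for i < m (0-based).
  Polynomial identities are stated as identities of evaluations over an arbitrary field.\<close>

definition super_h :: "nat \<Rightarrow> nat \<Rightarrow> (nat \<Rightarrow> 'a::field) \<Rightarrow> nat \<Rightarrow> (nat \<Rightarrow> 'a) \<Rightarrow> 'a" where
  "super_h a m x n y =
     fps_nth ((\<Prod>j<n. 1 - fps_const (y j) * fps_X) *
              (\<Prod>i<m. inverse (1 - fps_const (x i) * fps_X))) a"

definition super_hz :: "int \<Rightarrow> nat \<Rightarrow> (nat \<Rightarrow> 'a::field) \<Rightarrow> nat \<Rightarrow> (nat \<Rightarrow> 'a) \<Rightarrow> 'a" where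
  "super_hz a m x n y = (if a < 0 then 0 else super_h (nat a) m x n y)"

text \<open>A partition is a weakly decreasing sequence of naturals with finitely many nonzero
  parts; mu_{r+1} is mu r (0-based).\<close>
definition is_partition :: "(nat \<Rightarrow> nat) \<Rightarrow> bool" where
  "is_partition mu \<longleftrightarrow> (\<forall>i. mu (Suc i) \<le> mu i) \<and> finite {i. mu i \<noteq> 0}"

definition part_length :: "(nat \<Rightarrow> nat) \<Rightarrow> nat" where
  "part_length mu = card {i. mu i \<noteq> 0}"

definition SP :: "(nat \<Rightarrow> nat) \<Rightarrow> nat \<Rightarrow> (nat \<Rightarrow> 'a::field) \<Rightarrow> nat \<Rightarrow> (nat \<Rightarrow> 'a) \<Rightarrow> 'a" where
  "SP mu m x n y =
     det (mat (part_length mu) (part_length mu)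
       (\<lambda>(r, s). super_hz (int (mu r) - int r + int s) m x n y))"

definition antisymmetrize ::
  "nat \<Rightarrow> nat \<Rightarrow> ((nat \<Rightarrow> 'a::field) \<Rightarrow> (nat \<Rightarrow> 'a) \<Rightarrow> 'a) \<Rightarrow> (nat \<Rightarrow> 'a) \<Rightarrow> (nat \<Rightarrow> 'a) \<Rightarrow> 'a" where
  "antisymmetrize m n f x y =
     (\<Sum>p\<in>{p. p permutes {..<m}}. \<Sum>q\<in>{q. q permutes {..<n}}.
        of_int (sign p * sign q) * f (x \<circ> p) (y \<circ> q))"

end

theory Submission
  imports Defs
begin

(* Expanding the Jacobi-Trudi determinant of SP_lam along its first row gives
   SP_lam(x,y) = sum_s h_{lam_1+s}(x,y) c_s with cofactors c_s that are symmetric in x and in y.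
   Since h_a(hat x,y) = h_a(x,y) - x_1 h_{a-1}(x,y), subtracting x_1 times each column from the
   next one shows that the same cofactors give SP_{hat lam}(hat x,y) = sum_s x_1^s c_s.  Both sides
   are therefore combinations, with the common symmetric coefficients c_s, of antisymmetrizations,
   and it remains to show
     { prod_j (x_1 - y_j) x_1^N x_2^(m-2) ... x_m^0 y^rho } = h_{N+n-m+1}(x,y) { x^rho y^rho }.
   Writing prod_j (x_1 - y_j) = sum_i e_i(y) x_1^(n-i), where the e_i(y) are the coefficients of
   prod_j (1 - y_j t), this reduces to the one-row bialternant formula
     { x_1^N x_2^(m-2) ... x_m^0 }_x = h_{N-m+1}(x) { x^rho }_x.
   Its left side vanishes for N < m-1 (two equal exponents) and, every x_k being a root of
   prod_j (t - x_j), satisfies for N >= m the same linear recurrence as h_{N-m+1}(x), which comes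
   from prod_j (1 - x_j t) * prod_j 1/(1 - x_j t) = 1. *)

definition elem_series :: "(nat \<Rightarrow> 'a::field) \<Rightarrow> nat \<Rightarrow> 'a fps" where
  "elem_series y n = (\<Prod>j<n. 1 - fps_const (y j) * fps_X)"

definition compl_series :: "(nat \<Rightarrow> 'a::field) \<Rightarrow> nat \<Rightarrow> 'a fps" where
  "compl_series x m = (\<Prod>i<m. inverse (1 - fps_const (x i) * fps_X))"

definition fps_nth_int :: "'a::zero fps \<Rightarrow> int \<Rightarrow> 'a" where
  "fps_nth_int f a = (if a < 0 then 0 else fps_nth f (nat a))"

lemma super_hz_eq_fps_nth_int:
  "super_hz a m x n y = fps_nth_int (elem_series y n * compl_series x m) a"
  by (simp add: super_hz_def super_h_def fps_nth_int_def elem_series_def compl_series_def)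

lemma fps_nth_elem_series_Suc:
  "fps_nth (elem_series y (Suc n)) k =
     fps_nth (elem_series y n) k - (if k = 0 then 0 else y n * fps_nth (elem_series y n) (k - 1))"
proof -
  have "elem_series y (Suc n) = elem_series y n - fps_X * (fps_const (y n) * elem_series y n)"
    by (simp add: elem_series_def algebra_simps)
  then show ?thesis
    by simp
qed

lemma fps_nth_elem_series_0 [simp]: "fps_nth (elem_series y n) 0 = 1"
  by (induction n) (simp_all add: elem_series_def[of y 0] fps_nth_elem_series_Suc)

lemma fps_nth_compl_series_0 [simp]: "fps_nth (compl_series x m) 0 = 1"
  by (induction m) (simp_all add: compl_series_def)

lemma super_hz_0 [simp]: "super_hz 0 m x n y = 1"
  by (simp add: super_hz_eq_fps_nth_int fps_nth_int_def)

lemma fps_nth_elem_series_eq_0: "n < k \<Longrightarrow> fps_nth (elem_series y n) k = 0"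
proof (induction n arbitrary: k)
  case 0
  then show ?case by (simp add: elem_series_def)
next
  case (Suc n)
  then show ?case by (simp add: fps_nth_elem_series_Suc)
qed

lemma prod_diff_eq_elem_series:
  "(\<Prod>j<n. t - y j) = (\<Sum>i\<le>n. fps_nth (elem_series y n) i * t ^ (n - i))"
proof (induction n)
  case 0
  then show ?case by (simp add: elem_series_def)
next
  case (Suc n)
  let ?e = "fps_nth (elem_series y n)"
  have "(\<Prod>j<Suc n. t - y j) = (\<Sum>i\<le>n. ?e i * t ^ (n - i)) * (t - y n)"
    using Suc by simp
  also have "\<dots> = (\<Sum>i\<le>n. ?e i * t ^ (Suc n - i)) - (\<Sum>i\<le>n. y n * ?e i * t ^ (n - i))"
    by (simp add: algebra_simps sum_distrib_left sum_distrib_right sum_subtractf Suc_diff_le)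
  also have "(\<Sum>i\<le>n. ?e i * t ^ (Suc n - i)) = (\<Sum>i\<le>Suc n. ?e i * t ^ (Suc n - i))"
    by (simp add: fps_nth_elem_series_eq_0)
  also have "(\<Sum>i\<le>n. y n * ?e i * t ^ (n - i))
      = (\<Sum>i\<le>Suc n. (if i = 0 then 0 else y n * ?e (i - 1)) * t ^ (Suc n - i))"
    by (subst sum.atMost_Suc_shift) simp
  finally show ?case
    by (simp only: fps_nth_elem_series_Suc left_diff_distrib sum_subtractf)
qed

lemma elem_series_permute: "q permutes {..<n} \<Longrightarrow> elem_series (y \<circ> q) n = elem_series y n"
  unfolding elem_series_def by (subst prod.permute[of q]) (simp_all add: o_def)

lemma compl_series_permute: "p permutes {..<m} \<Longrightarrow> compl_series (x \<circ> p) m = compl_series x m"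
  unfolding compl_series_def by (subst prod.permute[of p]) (simp_all add: o_def)

lemma super_hz_permute:
  "p permutes {..<m} \<Longrightarrow> q permutes {..<n} \<Longrightarrow>
     super_hz a m (x \<circ> p) n (y \<circ> q) = super_hz a m x n y"
  by (simp add: super_hz_eq_fps_nth_int elem_series_permute compl_series_permute)

lemma elem_series_mult_compl_series: "elem_series x m * compl_series x m = 1"
proof (induction m)
  case 0
  then show ?case by (simp add: elem_series_def compl_series_def)
next
  case (Suc m)
  have "(1 - fps_const (x m) * fps_X) * inverse (1 - fps_const (x m) * fps_X) = 1"
    by (rule inverse_mult_eq_1') simp
  with Suc show ?case
    by (simp add: elem_series_def compl_series_def algebra_simps)
qed

lemma fps_nth_int_mult_poly:
  fixes f g :: "'a::comm_semiring_1 fps"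
  assumes deg: "\<And>i. n < i \<Longrightarrow> fps_nth f i = 0"
  shows "fps_nth_int (f * g) a = (\<Sum>i\<le>n. fps_nth f i * fps_nth_int g (a - int i))"
proof (cases "a < 0")
  case True
  then show ?thesis by (simp add: fps_nth_int_def)
next
  case False
  let ?t = "\<lambda>i. fps_nth f i * fps_nth_int g (a - int i)"
  have "fps_nth_int (f * g) a = (\<Sum>i=0..nat a. fps_nth f i * fps_nth g (nat a - i))"
    using False by (simp add: fps_nth_int_def fps_mult_nth)
  also have "\<dots> = (\<Sum>i=0..nat a. ?t i)"
    using False by (intro sum.cong) (auto simp: fps_nth_int_def nat_diff_distrib)
  also have "\<dots> = (\<Sum>i\<in>{0..nat a} \<union> {..n}. ?t i)"
    by (rule sum.mono_neutral_left) (auto simp: deg fps_nth_int_def not_le)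
  also have "\<dots> = (\<Sum>i\<le>n. ?t i)"
    by (rule sum.mono_neutral_right) (auto simp: deg fps_nth_int_def not_le)
  finally show ?thesis .
qed

lemma super_hz_eq_sum_elem_compl:
  "super_hz a m x n y
     = (\<Sum>i\<le>n. fps_nth (elem_series y n) i * fps_nth_int (compl_series x m) (a - int i))"
  unfolding super_hz_eq_fps_nth_int by (rule fps_nth_int_mult_poly) (rule fps_nth_elem_series_eq_0)

lemma compl_series_recurrence:
  assumes "1 \<le> k"
  shows "fps_nth_int (compl_series x m) k
       = - (\<Sum>j\<in>{1..m}. fps_nth (elem_series x m) j * fps_nth_int (compl_series x m) (k - int j))"
proof -
  have "{..m} = insert 0 {1..m}" by auto
  then have "(\<Sum>j\<le>m. fps_nth (elem_series x m) j * fps_nth_int (compl_series x m) (k - int j))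
      = fps_nth_int (compl_series x m) k
        + (\<Sum>j\<in>{1..m}. fps_nth (elem_series x m) j * fps_nth_int (compl_series x m) (k - int j))"
    by simp
  also have "(\<Sum>j\<le>m. fps_nth (elem_series x m) j * fps_nth_int (compl_series x m) (k - int j))
      = fps_nth_int (elem_series x m * compl_series x m) k"
    by (rule fps_nth_int_mult_poly[symmetric]) (rule fps_nth_elem_series_eq_0)
  also have "\<dots> = 0"
    using assms by (simp add: elem_series_mult_compl_series fps_nth_int_def)
  finally show ?thesis
    by (simp add: eq_neg_iff_add_eq_0)
qed

lemma power_root_recurrence:
  assumes "k < m" "m \<le> M"
  shows "x k ^ M = - (\<Sum>j\<in>{1..m}. fps_nth (elem_series x m) j * x k ^ (M - j))"
proof -
  have "(\<Sum>j\<le>m. fps_nth (elem_series x m) j * x k ^ (M - j))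
      = (\<Sum>j\<le>m. fps_nth (elem_series x m) j * x k ^ (m - j)) * x k ^ (M - m)"
    unfolding sum_distrib_right
    using assms by (intro sum.cong refl) (simp add: mult.assoc power_add[symmetric])
  also have "\<dots> = (\<Prod>j<m. x k - x j) * x k ^ (M - m)"
    by (simp add: prod_diff_eq_elem_series)
  also have "(\<Prod>j<m. x k - x j) = 0"
    using assms by (intro prod_zero) auto
  finally have "(\<Sum>j\<le>m. fps_nth (elem_series x m) j * x k ^ (M - j)) = 0"
    by simp
  moreover have "{..m} = insert 0 {1..m}" by auto
  ultimately show ?thesis
    by (simp add: eq_neg_iff_add_eq_0)
qed

definition alternating_sum :: "nat \<Rightarrow> ((nat \<Rightarrow> 'a::field) \<Rightarrow> 'a) \<Rightarrow> (nat \<Rightarrow> 'a) \<Rightarrow> 'a" where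
  "alternating_sum m f x = (\<Sum>p\<in>{p. p permutes {..<m}}. of_int (sign p) * f (x \<circ> p))"

lemma alternating_sum_monomial_eq_det:
  fixes x :: "nat \<Rightarrow> 'a::field"
  shows "alternating_sum m (\<lambda>x. \<Prod>i<m. x i ^ e i) x = det (mat m m (\<lambda>(i, j). x j ^ e i))"
  unfolding alternating_sum_def det_def'[OF mat_carrier] lessThan_atLeast0
  by (intro sum.cong refl arg_cong2[where f = "(*)"] prod.cong) (auto simp: permutes_in_image)

lemma alternating_sum_monomial_repeated_exponent:
  fixes x :: "nat \<Rightarrow> 'a::field"
  assumes "i < m" "k < m" "i \<noteq> k" "e i = e k"
  shows "alternating_sum m (\<lambda>x. \<Prod>i<m. x i ^ e i) x = 0"
  unfolding alternating_sum_monomial_eq_det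
  by (rule det_identical_rows[of _ m i k]) (use assms in \<open>auto intro!: eq_vecI\<close>)

definition rho_monomial :: "nat \<Rightarrow> (nat \<Rightarrow> 'a::comm_semiring_1) \<Rightarrow> 'a" where
  "rho_monomial m x = (\<Prod>i<m. x i ^ (m - 1 - i))"

definition rho_monomial_head :: "nat \<Rightarrow> nat \<Rightarrow> (nat \<Rightarrow> 'a::comm_semiring_1) \<Rightarrow> 'a" where
  "rho_monomial_head N m x = x 0 ^ N * (\<Prod>i\<in>{1..<m}. x i ^ (m - 1 - i))"

lemma rho_monomial_head_eq_prod:
  "1 \<le> m \<Longrightarrow> rho_monomial_head N m x = (\<Prod>i<m. x i ^ (if i = 0 then N else m - 1 - i))"
  by (auto simp: rho_monomial_head_def lessThan_atLeast0 prod.atLeast_Suc_lessThan intro!: prod.cong)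

lemma rho_monomial_head_rho: "1 \<le> m \<Longrightarrow> rho_monomial_head (m - 1) m x = rho_monomial m x"
  by (auto simp: rho_monomial_head_eq_prod rho_monomial_def intro!: prod.cong)

lemma alternating_sum_rho_monomial_head_small:
  fixes x :: "nat \<Rightarrow> 'a::field"
  assumes "1 \<le> m" "N < m - 1"
  shows "alternating_sum m (rho_monomial_head N m) x = 0"
  using alternating_sum_monomial_repeated_exponent[of 0 m "m - 1 - N" "\<lambda>i. if i = 0 then N else m - 1 - i" x]
    assms
  by (simp add: rho_monomial_head_eq_prod[OF assms(1), abs_def])

lemma alternating_sum_rho_monomial_head_recurrence:
  fixes x :: "nat \<Rightarrow> 'a::field"
  assumes "1 \<le> m" "m \<le> N"
  shows "alternating_sum m (rho_monomial_head N m) x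
       = - (\<Sum>j\<in>{1..m}. fps_nth (elem_series x m) j * alternating_sum m (rho_monomial_head (N - j) m) x)"
proof -
  let ?P = "{p. p permutes {..<m}}" and ?e = "fps_nth (elem_series x m)"
  have "alternating_sum m (rho_monomial_head N m) x
      = (\<Sum>p\<in>?P. - (\<Sum>j\<in>{1..m}.
           ?e j * (of_int (sign p) * rho_monomial_head (N - j) m (x \<circ> p))))"
    unfolding alternating_sum_def
  proof (rule sum.cong [OF refl])
    fix p assume "p \<in> ?P"
    then have "p 0 < m"
      using assms(1) permutes_in_image[of p "{..<m}" 0] by simp
    then show "of_int (sign p) * rho_monomial_head N m (x \<circ> p)
        = - (\<Sum>j\<in>{1..m}. ?e j * (of_int (sign p) * rho_monomial_head (N - j) m (x \<circ> p)))"
      using power_root_recurrence[of "p 0" m N x] assms(2)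
      by (simp add: rho_monomial_head_def sum_distrib_left sum_distrib_right mult_ac)
  qed
  also have "\<dots> = - (\<Sum>j\<in>{1..m}. ?e j * alternating_sum m (rho_monomial_head (N - j) m) x)"
    unfolding alternating_sum_def sum_distrib_left sum_negf by (subst sum.swap) (rule refl)
  finally show ?thesis .
qed

lemma alternating_sum_rho_monomial_head:
  fixes x :: "nat \<Rightarrow> 'a::field"
  assumes "1 \<le> m"
  shows "alternating_sum m (rho_monomial_head N m) x
       = fps_nth_int (compl_series x m) (int N + 1 - int m) * alternating_sum m (rho_monomial m) x"
proof (induction N rule: less_induct)
  case (less N)
  let ?h = "fps_nth_int (compl_series x m)" and ?e = "fps_nth (elem_series x m)"
  consider "N < m - 1" | "N = m - 1" | "m \<le> N" by linarith
  then show ?case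
  proof cases
    case 1
    then have "int N + 1 - int m < 0"
      by linarith
    then show ?thesis
      using alternating_sum_rho_monomial_head_small[OF assms 1] by (simp add: fps_nth_int_def)
  next
    case 2
    then show ?thesis
      unfolding 2 rho_monomial_head_rho[OF assms] using assms by (simp add: fps_nth_int_def)
  next
    case 3
    have "alternating_sum m (rho_monomial_head N m) x
        = - (\<Sum>j\<in>{1..m}. ?e j * (?h (int N + 1 - int m - int j) * alternating_sum m (rho_monomial m) x))"
      unfolding alternating_sum_rho_monomial_head_recurrence[OF assms 3]
      using 3 assms by (intro arg_cong[where f = uminus] sum.cong refl) (simp add: less of_nat_diff algebra_simps)
    also have "\<dots> = ?h (int N + 1 - int m) * alternating_sum m (rho_monomial m) x"
      using 3 compl_series_recurrence[of "int N + 1 - int m" x m]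
      by (simp add: sum_distrib_right mult.assoc)
    finally show ?thesis .
  qed
qed

lemma antisymmetrize_cong:
  assumes "\<And>p q. p permutes {..<m} \<Longrightarrow> q permutes {..<n} \<Longrightarrow>
             f (x \<circ> p) (y \<circ> q) = g (x \<circ> p) (y \<circ> q)"
  shows "antisymmetrize m n f x y = antisymmetrize m n g x y"
  unfolding antisymmetrize_def using assms by (intro sum.cong refl) auto

lemma antisymmetrize_linear:
  "antisymmetrize m n (\<lambda>x y. \<Sum>s\<in>S. c s * f s x y) x y
     = (\<Sum>s\<in>S. c s * antisymmetrize m n (f s) x y)"
  unfolding antisymmetrize_def sum_distrib_left
  by (simp add: sum.swap[of _ S] mult_ac)

lemma antisymmetrize_symmetric_mult:
  assumes "\<And>p q. p permutes {..<m} \<Longrightarrow> q permutes {..<n} \<Longrightarrow>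
             g (x \<circ> p) (y \<circ> q) = g x y"
  shows "antisymmetrize m n (\<lambda>x y. g x y * f x y) x y = g x y * antisymmetrize m n f x y"
  unfolding antisymmetrize_def sum_distrib_left
  using assms by (intro sum.cong refl) (simp add: mult_ac)

lemma antisymmetrize_mult:
  "antisymmetrize m n (\<lambda>x y. f x * g y) x y = alternating_sum m f x * alternating_sum n g y"
  unfolding antisymmetrize_def alternating_sum_def sum_product
  by (intro sum.cong refl) (simp add: mult_ac)

lemma antisymmetrize_prod_diff_rho_monomial_head:
  fixes x y :: "nat \<Rightarrow> 'a::field"
  assumes "1 \<le> m"
  shows "antisymmetrize m n
           (\<lambda>x y. (\<Prod>j<n. x 0 - y j) * rho_monomial_head N m x * rho_monomial n y) x y
       = super_hz (int N + int n + 1 - int m) m x n y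
         * antisymmetrize m n (\<lambda>x y. rho_monomial m x * rho_monomial n y) x y"
proof -
  let ?e = "fps_nth (elem_series y n)" and ?h = "fps_nth_int (compl_series x m)"
  let ?ay = "alternating_sum n (rho_monomial n) y"
  have "antisymmetrize m n
          (\<lambda>x y. (\<Prod>j<n. x 0 - y j) * rho_monomial_head N m x * rho_monomial n y) x y
      = antisymmetrize m n
          (\<lambda>x y. \<Sum>i\<le>n. ?e i * (rho_monomial_head (N + (n - i)) m x * rho_monomial n y)) x y"
  proof (rule antisymmetrize_cong)
    fix p q :: "nat \<Rightarrow> nat"
    assume "q permutes {..<n}"
    then have "(\<Prod>j<n. (x \<circ> p) 0 - (y \<circ> q) j) = (\<Prod>j<n. x (p 0) - y j)"
      by (subst prod.permute[of q]) (simp_all add: o_def)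
    also have "\<dots> = (\<Sum>i\<le>n. ?e i * x (p 0) ^ (n - i))"
      by (rule prod_diff_eq_elem_series)
    finally have expand:
      "(\<Prod>j<n. (x \<circ> p) 0 - (y \<circ> q) j) = (\<Sum>i\<le>n. ?e i * x (p 0) ^ (n - i))" .
    show "(\<Prod>j<n. (x \<circ> p) 0 - (y \<circ> q) j) * rho_monomial_head N m (x \<circ> p) * rho_monomial n (y \<circ> q)
        = (\<Sum>i\<le>n. ?e i * (rho_monomial_head (N + (n - i)) m (x \<circ> p) * rho_monomial n (y \<circ> q)))"
      unfolding expand sum_distrib_right rho_monomial_head_def power_add by (simp add: mult_ac)
  qed
  also have "\<dots> = (\<Sum>i\<le>n. ?e i * (alternating_sum m (rho_monomial_head (N + (n - i)) m) x * ?ay))"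
    by (simp add: antisymmetrize_linear antisymmetrize_mult)
  also have "\<dots> = (\<Sum>i\<le>n. ?e i * ?h (int N + int n + 1 - int m - int i))
                  * (alternating_sum m (rho_monomial m) x * ?ay)"
    unfolding sum_distrib_right alternating_sum_rho_monomial_head[OF assms]
    by (intro sum.cong refl) (simp add: of_nat_diff algebra_simps)
  also have "\<dots> = super_hz (int N + int n + 1 - int m) m x n y
         * antisymmetrize m n (\<lambda>x y. rho_monomial m x * rho_monomial n y) x y"
    by (simp add: super_hz_eq_sum_elem_compl antisymmetrize_mult)
  finally show ?thesis .
qed

lemma partition_nonzero_parts:
  assumes "is_partition lam"
  shows "{i. lam i \<noteq> 0} = {..<part_length lam}"
proof -
  let ?S = "{i. lam i \<noteq> 0}"
  have fin: "finite ?S"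
    using assms by (simp add: is_partition_def)
  have down: "j \<in> ?S" if "i \<in> ?S" "j \<le> i" for i j
  proof -
    have "lam i \<le> lam j"
      using assms that(2) unfolding is_partition_def by (auto intro: lift_Suc_antimono_le)
    with that(1) show ?thesis
      by simp
  qed
  have "i < card ?S" if "i \<in> ?S" for i
  proof -
    have "{..i} \<subseteq> ?S"
      using down that by blast
    from card_mono[OF fin this] show ?thesis
      by simp
  qed
  moreover have "i \<in> ?S" if "i < card ?S" for i
  proof (rule ccontr)
    assume "i \<notin> ?S"
    then have "?S \<subseteq> {..<i}"
      using down by (metis lessThan_iff not_le subsetI)
    from card_mono[OF _ this] that show False
      by simp
  qed
  ultimately show ?thesis
    unfolding part_length_def by blast
qed

lemma part_length_tail:
  assumes "is_partition lam"
  shows "part_length (\<lambda>i. lam (Suc i)) = part_length lam - 1"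
proof -
  have "lam (Suc i) \<noteq> 0 \<longleftrightarrow> i < part_length lam - 1" for i
    using partition_nonzero_parts[OF assms, unfolded set_eq_iff, rule_format, of "Suc i"] by auto
  then have "{i. lam (Suc i) \<noteq> 0} = {..<part_length lam - 1}"
    by auto
  then show ?thesis
    unfolding part_length_def[of "\<lambda>i. lam (Suc i)"] by simp
qed

definition jacobi_trudi_mat ::
  "(nat \<Rightarrow> nat) \<Rightarrow> nat \<Rightarrow> (nat \<Rightarrow> 'a::field) \<Rightarrow> nat \<Rightarrow> (nat \<Rightarrow> 'a) \<Rightarrow> 'a mat" where
  "jacobi_trudi_mat lam m x n y = mat (part_length lam) (part_length lam)
     (\<lambda>(r, s). super_hz (int (lam r) - int r + int s) m x n y)"

lemma SP_eq_det_jacobi_trudi_mat: "SP lam m x n y = det (jacobi_trudi_mat lam m x n y)"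
  by (simp add: SP_def jacobi_trudi_mat_def)

lemma jacobi_trudi_mat_permute:
  "p permutes {..<m} \<Longrightarrow> q permutes {..<n} \<Longrightarrow>
     jacobi_trudi_mat lam m (x \<circ> p) n (y \<circ> q) = jacobi_trudi_mat lam m x n y"
  by (simp add: jacobi_trudi_mat_def super_hz_permute)

lemma SP_permute:
  "p permutes {..<m} \<Longrightarrow> q permutes {..<n} \<Longrightarrow>
     SP lam m (x \<circ> p) n (y \<circ> q) = SP lam m x n y"
  by (simp add: SP_eq_det_jacobi_trudi_mat jacobi_trudi_mat_permute)

lemma SP_empty: "part_length lam = 0 \<Longrightarrow> SP lam m x n y = 1"
proof -
  assume "part_length lam = 0"
  moreover have "mat 0 0 f = (1\<^sub>m 0 :: 'a mat)" for f :: "nat \<times> nat \<Rightarrow> 'a::field"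
    by (rule eq_matI) auto
  ultimately show ?thesis
    by (simp add: SP_def)
qed

lemma SP_first_row_expansion:
  assumes "1 \<le> part_length lam"
  shows "SP lam m x n y = (\<Sum>s<part_length lam.
           super_hz (int (lam 0) + int s) m x n y * cofactor (jacobi_trudi_mat lam m x n y) 0 s)"
  unfolding SP_eq_det_jacobi_trudi_mat
  by (subst laplace_expansion_row[of _ "part_length lam" 0])
     (use assms in \<open>auto simp: jacobi_trudi_mat_def\<close>)

lemma super_hz_drop_first:
  assumes "1 \<le> m"
  shows "super_hz a (m - 1) (\<lambda>i. x (Suc i)) n y = super_hz a m x n y - x 0 * super_hz (a - 1) m x n y"
proof -
  obtain k where m: "m = Suc k"
    using assms by (cases m) auto
  let ?F = "elem_series y n * compl_series x m"
  have "compl_series x m = inverse (1 - fps_const (x 0) * fps_X) * compl_series (\<lambda>i. x (Suc i)) k"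
    unfolding m compl_series_def by (subst prod.lessThan_Suc_shift) simp
  then have "compl_series (\<lambda>i. x (Suc i)) k = (1 - fps_const (x 0) * fps_X) * compl_series x m"
    by (simp add: mult.assoc[symmetric] inverse_mult_eq_1')
  then have "elem_series y n * compl_series (\<lambda>i. x (Suc i)) k = ?F - fps_X * (fps_const (x 0) * ?F)"
    by (simp only:) (simp add: algebra_simps)
  then show ?thesis
    unfolding super_hz_eq_fps_nth_int m by (simp add: fps_nth_int_def nat_diff_distrib')
qed

lemma det_subtract_previous_column:
  fixes C :: "'a::comm_ring_1 mat"
  assumes C: "C \<in> carrier_mat l l"
  shows "det (mat l l (\<lambda>(i, j). if j = 0 then C $$ (i, 0) else C $$ (i, j) - t * C $$ (i, j - 1)))
       = det C" (is "det ?D = _")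
proof -
  define U where "U = mat l l (\<lambda>(r, s). if r = s then 1 else if Suc r = s then - t else 0)"
  have U: "U \<in> carrier_mat l l"
    by (simp add: U_def)
  have "det U = 1"
  proof -
    have "upper_triangular U"
      by (auto simp: upper_triangular_def U_def)
    then have "det U = prod_list (diag_mat U)"
      using U by (rule det_upper_triangular)
    also have "diag_mat U = replicate l 1"
      by (rule nth_equalityI) (simp_all add: diag_mat_def U_def)
    finally show ?thesis
      by simp
  qed
  moreover have "C * U = ?D"
  proof (rule eq_matI)
    fix i j assume "i < dim_row ?D" "j < dim_col ?D"
    then have ij: "i < l" "j < l"
      by auto
    have "(C * U) $$ (i, j)
        = (\<Sum>k<l. C $$ (i, k) * (if k = j then 1 else if Suc k = j then - t else 0))"
      using C U ij by (simp add: scalar_prod_def lessThan_atLeast0 U_def)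
    also have "\<dots> = (\<Sum>k<l. if k = j then C $$ (i, k) else 0)
                    + (\<Sum>k<l. if Suc k = j then - t * C $$ (i, k) else 0)"
      unfolding sum.distrib[symmetric] by (intro sum.cong refl) auto
    also have "(\<Sum>k<l. if k = j then C $$ (i, k) else 0) = C $$ (i, j)"
      using ij by simp
    also have "(\<Sum>k<l. if Suc k = j then - t * C $$ (i, k) else 0)
        = (if j = 0 then 0 else - t * C $$ (i, j - 1))"
      using ij by (cases j) simp_all
    finally show "(C * U) $$ (i, j) = ?D $$ (i, j)"
      using ij by (cases "j = 0") simp_all
  qed (use C U in auto)
  ultimately show ?thesis
    using det_mult[OF C U] by simp
qed

lemma SP_tail_drop_first:
  assumes "1 \<le> part_length lam" "1 \<le> m" "is_partition lam"
  shows "SP (\<lambda>i. lam (Suc i)) (m - 1) (\<lambda>i. x (Suc i)) n y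
       = (\<Sum>s<part_length lam. x 0 ^ s * cofactor (jacobi_trudi_mat lam m x n y) 0 s)"
proof -
  define l where "l = part_length lam"
  obtain k where lk: "l = Suc k"
    using assms(1) unfolding l_def by (cases "part_length lam") auto
  have tail_length: "part_length (\<lambda>i. lam (Suc i)) = k"
    using part_length_tail[OF assms(3)] by (simp add: lk flip: l_def)
  let ?J = "jacobi_trudi_mat (\<lambda>i. lam (Suc i)) (m - 1) (\<lambda>i. x (Suc i)) n y"
  define B where "B = jacobi_trudi_mat lam m x n y"
  define C where "C = mat l l (\<lambda>(r, s). if r = 0 then x 0 ^ s else B $$ (r, s))"
  define D where
    "D = mat l l (\<lambda>(i, j). if j = 0 then C $$ (i, 0) else C $$ (i, j) - x 0 * C $$ (i, j - 1))"
  have B: "B \<in> carrier_mat l l"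
    by (simp add: B_def jacobi_trudi_mat_def l_def)
  have C: "C \<in> carrier_mat l l"
    by (simp add: C_def)
  have "mat_delete D 0 0 = ?J"
  proof (rule eq_matI)
    fix i j assume "i < dim_row ?J" "j < dim_col ?J"
    then have ij: "i < k" "j < k"
      by (simp_all add: jacobi_trudi_mat_def tail_length)
    have "mat_delete D 0 0 $$ (i, j) = B $$ (Suc i, Suc j) - x 0 * B $$ (Suc i, j)"
      using ij by (simp add: mat_delete_def D_def C_def lk)
    also have "\<dots> = super_hz (int (lam (Suc i)) - int i + int j) (m - 1) (\<lambda>i. x (Suc i)) n y"
      using ij super_hz_drop_first[OF assms(2), of "int (lam (Suc i)) - int i + int j" x n y]
      by (simp add: B_def jacobi_trudi_mat_def lk algebra_simps flip: l_def)
    finally show "mat_delete D 0 0 $$ (i, j) = ?J $$ (i, j)"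
      using ij by (simp add: jacobi_trudi_mat_def tail_length)
  qed (simp_all add: D_def jacobi_trudi_mat_def tail_length lk)
  then have "SP (\<lambda>i. lam (Suc i)) (m - 1) (\<lambda>i. x (Suc i)) n y = det (mat_delete D 0 0)"
    by (simp add: SP_eq_det_jacobi_trudi_mat)
  also have "\<dots> = det D"
  proof -
    have "det D = (\<Sum>s<l. D $$ (0, s) * cofactor D 0 s)"
      by (rule laplace_expansion_row) (simp_all add: D_def lk)
    also have "\<dots> = (\<Sum>s<l. if s = 0 then cofactor D 0 0 else 0)"
      by (intro sum.cong refl) (auto simp: D_def C_def lk power_eq_if)
    finally show ?thesis
      by (simp add: lk cofactor_def)
  qed
  also have "\<dots> = det C"
    unfolding D_def by (rule det_subtract_previous_column[OF C])
  also have "\<dots> = (\<Sum>s<l. x 0 ^ s * cofactor B 0 s)"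
  proof -
    have "mat_delete C 0 s = mat_delete B 0 s" for s
      by (rule eq_matI) (use B in \<open>auto simp: C_def mat_delete_def\<close>)
    then show ?thesis
      by (subst laplace_expansion_row[OF C, of 0]) (auto simp: lk C_def cofactor_def intro!: sum.cong)
  qed
  finally show ?thesis
    by (simp add: l_def B_def)
qed

lemma SP_first_row_decomposition:
  fixes x y :: "nat \<Rightarrow> 'a::field"
  assumes "1 \<le> m" "is_partition lam"
  obtains L c where
    "SP lam m x n y = (\<Sum>s<L. super_hz (int (lam 0) + int s) m x n y * c s)"
    "\<And>p q. p permutes {..<m} \<Longrightarrow> q permutes {..<n} \<Longrightarrow>
       SP (\<lambda>i. lam (Suc i)) (m - 1) (\<lambda>i. x (p (Suc i))) n (y \<circ> q) = (\<Sum>s<L. x (p 0) ^ s * c s)"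
proof (cases "part_length lam = 0")
  case True
  then have "lam 0 = 0" and "part_length (\<lambda>i. lam (Suc i)) = 0"
    using partition_nonzero_parts[OF assms(2)] part_length_tail[OF assms(2)] by auto
  with True show thesis
    by (intro that[where L = 1 and c = "\<lambda>_. 1"]) (simp_all add: SP_empty)
next
  case False
  let ?c = "\<lambda>s. cofactor (jacobi_trudi_mat lam m x n y) 0 s"
  show thesis
  proof (rule that[where L = "part_length lam" and c = ?c])
    show "SP lam m x n y = (\<Sum>s<part_length lam. super_hz (int (lam 0) + int s) m x n y * ?c s)"
      using False by (simp add: SP_first_row_expansion)
  next
    fix p q assume "p permutes {..<m}" "q permutes {..<n}"
    then show "SP (\<lambda>i. lam (Suc i)) (m - 1) (\<lambda>i. x (p (Suc i))) n (y \<circ> q)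
        = (\<Sum>s<part_length lam. x (p 0) ^ s * ?c s)"
      using False SP_tail_drop_first[of lam m "x \<circ> p" n "y \<circ> q"] assms
      by (simp add: jacobi_trudi_mat_permute)
  qed
qed

theorem lemma2p2:
  fixes lam :: "nat \<Rightarrow> nat" and m n :: nat and x y :: "nat \<Rightarrow> 'a::field"
  assumes "m \<ge> 1"
    and "is_partition lam"
    and "int (lam 0) + (int m - int n) - 1 \<ge> 0"
  shows "antisymmetrize m n
           (\<lambda>x y. SP lam m x n y * (\<Prod>i<m. x i ^ (m - 1 - i)) * (\<Prod>j<n. y j ^ (n - 1 - j))) x y
       = antisymmetrize m n
           (\<lambda>x y. (\<Prod>j<n. (x 0 - y j)) * x 0 ^ nat (int (lam 0) + (int m - int n) - 1)
                  * SP (\<lambda>i. lam (Suc i)) (m - 1) (\<lambda>i. x (Suc i)) n y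
                  * (\<Prod>i\<in>{1..<m}. x i ^ (m - 1 - i)) * (\<Prod>j<n. y j ^ (n - 1 - j))) x y"
proof -
  define N where "N = nat (int (lam 0) + (int m - int n) - 1)"
  obtain L c where SP_row: "SP lam m x n y = (\<Sum>s<L. super_hz (int (lam 0) + int s) m x n y * c s)"
    and SP_tail: "\<And>p q. p permutes {..<m} \<Longrightarrow> q permutes {..<n} \<Longrightarrow>
       SP (\<lambda>i. lam (Suc i)) (m - 1) (\<lambda>i. x (p (Suc i))) n (y \<circ> q) = (\<Sum>s<L. x (p 0) ^ s * c s)"
    by (rule SP_first_row_decomposition[OF assms(1,2), where x = x and y = y and n = n]) blast
  let ?A = "antisymmetrize m n (\<lambda>x y. rho_monomial m x * rho_monomial n y) x y"
  have "antisymmetrize m n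
           (\<lambda>x y. SP lam m x n y * (\<Prod>i<m. x i ^ (m - 1 - i)) * (\<Prod>j<n. y j ^ (n - 1 - j))) x y
      = SP lam m x n y * ?A"
    unfolding mult.assoc rho_monomial_def by (rule antisymmetrize_symmetric_mult) (rule SP_permute)
  also have "\<dots> = (\<Sum>s<L. c s * (super_hz (int (N + s) + int n + 1 - int m) m x n y * ?A))"
    using assms(3) unfolding SP_row sum_distrib_right N_def
    by (intro sum.cong refl) (simp add: algebra_simps)
  also have "\<dots> = (\<Sum>s<L. c s * antisymmetrize m n
      (\<lambda>x y. (\<Prod>j<n. x 0 - y j) * rho_monomial_head (N + s) m x * rho_monomial n y) x y)"
    by (simp add: antisymmetrize_prod_diff_rho_monomial_head[OF assms(1)])
  also have "\<dots> = antisymmetrize m n (\<lambda>x y. \<Sum>s<L. c s *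
      ((\<Prod>j<n. x 0 - y j) * rho_monomial_head (N + s) m x * rho_monomial n y)) x y"
    by (rule antisymmetrize_linear[symmetric])
  also have "\<dots> = antisymmetrize m n
           (\<lambda>x y. (\<Prod>j<n. (x 0 - y j)) * x 0 ^ N
                  * SP (\<lambda>i. lam (Suc i)) (m - 1) (\<lambda>i. x (Suc i)) n y
                  * (\<Prod>i\<in>{1..<m}. x i ^ (m - 1 - i)) * (\<Prod>j<n. y j ^ (n - 1 - j))) x y"
    by (rule antisymmetrize_cong) (simp only: o_apply SP_tail,
      simp add: rho_monomial_head_def rho_monomial_def sum_distrib_left power_add mult_ac)
  finally show ?thesis
    unfolding N_def .
qed

end
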